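(* Let $n\ge3$ and consider the scoring two-player Tower of Hanoi game on three pegs with real weights $w_{12},w_{13},w_{23}$, under any of the ending conditions (EC1)–(EC5). Then the first player wins, except in the case $w_{12}=w_{13}=w_{23}\le 0$, in which the game is a draw.
   Context: Tower of Hanoi on three pegs (labeled 1, 2, 3) with $n$ disks of pairwise distinct sizes: a position assigns each disk to a peg, disks on each peg stacked with sizes decreasing from bottom to top. A legal move transfers the top disk of one peg to a different peg that is empty or has a larger top disk; a move from Peg $i$ to Peg $j$ or from Peg $j$ to Peg $i$ is a move along edge $\{i,j\}$. A tower position is one with all disks on one peg. Two-player game: Anh (first player) and Bao (second player) alternate moves starting from the position with all disks on Peg 1; a player may not move the disk that the opponent moved in the immediately preceding move. The game ends when the tower has been transferred to a final peg, according to one fixed ending condition: (EC1) all disks on a given peg distinct from Peg 1; (EC2) all disks on Peg 1, the largest disk having been moved at least once; (EC3) all disks on Peg 1, the smallest disk having been moved at least once; (EC4) all disks on any peg, the largest disk having been moved at least once; (EC5) all disks on any peg, the smallest disk having been moved at least once. A move creating a tower position that does not end the game (tower on a non-final peg) is not allowed. Scoring play: real weights $w_{12},w_{13},w_{23}$ are given (with $w_{ij}=w_{ji}$); a player making a move along edge $\{i,j\}$ earns $w_{ij}$ points. When the game ends, the player with strictly more points wins, and equal points is a tie. A player "wins" the game if she/he has a strategy forcing the game to end with her/his victory; if neither player can force the game to terminate in a victory for her/himself, the game is a draw. *)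

theory Defs
  imports Complex_Main
begin

(* Disks are 0..n-1, disk i has size i (0 = smallest, n-1 = largest).
   Pegs are the natural numbers 1, 2, 3.
   A position is a list p of length n, p ! i = peg carrying disk i;
   the stacking order on each peg is forced by the sizes. *)

type_synonym pos = "nat list"

datatype ending = EC1 nat | EC2 | EC3 | EC4 | EC5

record gstate =
  gpos :: pos
  glast :: "nat option"  (* disk moved in the immediately preceding move *)
  gbig :: bool           (* largest disk has been moved at least once *)
  gsmall :: bool         (* smallest disk has been moved at least once *)
  gdiff :: real          (* points of Anh minus points of Bao *)
  ganh :: bool           (* True iff it is Anh's turn *)

definition peg :: "nat \<Rightarrow> bool" where
  "peg k \<longleftrightarrow> k \<in> {1,2,3}"

definition weight :: "real \<Rightarrow> real \<Rightarrow> real \<Rightarrow> nat \<Rightarrow> nat \<Rightarrow> real" where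
  "weight w12 w13 w23 i j =
     (if {i,j} = {1,2} then w12 else if {i,j} = {1,3} then w13 else w23)"

definition tower :: "nat \<Rightarrow> pos \<Rightarrow> nat \<Rightarrow> bool" where
  "tower n p k \<longleftrightarrow> (\<forall>e<n. p ! e = k)"

definition legal_move :: "nat \<Rightarrow> pos \<Rightarrow> nat \<Rightarrow> nat \<Rightarrow> bool" where
  "legal_move n p d j \<longleftrightarrow>
     d < n \<and> peg j \<and> j \<noteq> p ! d \<and>
     (\<forall>e<n. p ! e = p ! d \<longrightarrow> d \<le> e) \<and>
     (\<forall>e<n. p ! e = j \<longrightarrow> d < e)"

definition move_pos :: "pos \<Rightarrow> nat \<Rightarrow> nat \<Rightarrow> pos" where
  "move_pos p d j = p[d := j]"

definition game_over :: "nat \<Rightarrow> ending \<Rightarrow> pos \<Rightarrow> bool \<Rightarrow> bool \<Rightarrow> bool" where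
  "game_over n ec p big small =
     (case ec of
        EC1 f \<Rightarrow> tower n p f
      | EC2 \<Rightarrow> tower n p 1 \<and> big
      | EC3 \<Rightarrow> tower n p 1 \<and> small
      | EC4 \<Rightarrow> (\<exists>k. peg k \<and> tower n p k) \<and> big
      | EC5 \<Rightarrow> (\<exists>k. peg k \<and> tower n p k) \<and> small)"

definition step :: "nat \<Rightarrow> real \<Rightarrow> real \<Rightarrow> real \<Rightarrow> gstate \<Rightarrow> nat \<Rightarrow> nat \<Rightarrow> gstate" where
  "step n w12 w13 w23 s d j =
     \<lparr> gpos = move_pos (gpos s) d j,
       glast = Some d,
       gbig = (gbig s \<or> d = n - 1),
       gsmall = (gsmall s \<or> d = 0),
       gdiff = (if ganh s then gdiff s + weight w12 w13 w23 (gpos s ! d) j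
                else gdiff s - weight w12 w13 w23 (gpos s ! d) j),
       ganh = (\<not> ganh s) \<rparr>"

definition ends_after :: "nat \<Rightarrow> ending \<Rightarrow> real \<Rightarrow> real \<Rightarrow> real \<Rightarrow> gstate \<Rightarrow> nat \<Rightarrow> nat \<Rightarrow> bool" where
  "ends_after n ec w12 w13 w23 s d j =
     (let s' = step n w12 w13 w23 s d j in game_over n ec (gpos s') (gbig s') (gsmall s'))"

definition allowed :: "nat \<Rightarrow> ending \<Rightarrow> real \<Rightarrow> real \<Rightarrow> real \<Rightarrow> gstate \<Rightarrow> nat \<Rightarrow> nat \<Rightarrow> bool" where
  "allowed n ec w12 w13 w23 s d j \<longleftrightarrow>
     legal_move n (gpos s) d j \<and> glast s \<noteq> Some d \<and>
     ((\<exists>k. peg k \<and> tower n (move_pos (gpos s) d j) k) \<longrightarrow> ends_after n ec w12 w13 w23 s d j)"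

(* player pl (True = Anh, False = Bao) is the strict winner given score difference x *)
definition victor :: "bool \<Rightarrow> real \<Rightarrow> bool" where
  "victor pl x \<longleftrightarrow> (if pl then x > 0 else x < 0)"

inductive wins :: "nat \<Rightarrow> ending \<Rightarrow> real \<Rightarrow> real \<Rightarrow> real \<Rightarrow> bool \<Rightarrow> gstate \<Rightarrow> bool"
  for n ec w12 w13 w23 pl where
  own_turn:
    "\<lbrakk> ganh s = pl;
       allowed n ec w12 w13 w23 s d j;
       (ends_after n ec w12 w13 w23 s d j \<and> victor pl (gdiff (step n w12 w13 w23 s d j))) \<or>
       (\<not> ends_after n ec w12 w13 w23 s d j \<and> wins n ec w12 w13 w23 pl (step n w12 w13 w23 s d j)) \<rbrakk>
     \<Longrightarrow> wins n ec w12 w13 w23 pl s"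
| opp_turn:
    "\<lbrakk> ganh s \<noteq> pl;
       \<exists>d j. allowed n ec w12 w13 w23 s d j;
       \<forall>d j. allowed n ec w12 w13 w23 s d j \<longrightarrow>
         (ends_after n ec w12 w13 w23 s d j \<and> victor pl (gdiff (step n w12 w13 w23 s d j))) \<or>
         (\<not> ends_after n ec w12 w13 w23 s d j \<and> wins n ec w12 w13 w23 pl (step n w12 w13 w23 s d j)) \<rbrakk>
     \<Longrightarrow> wins n ec w12 w13 w23 pl s"

definition initial :: "nat \<Rightarrow> gstate" where
  "initial n = \<lparr> gpos = replicate n 1, glast = None, gbig = False, gsmall = False,
                 gdiff = 0, ganh = True \<rparr>"

definition valid_ending :: "ending \<Rightarrow> bool" where
  "valid_ending ec \<longleftrightarrow> (case ec of EC1 f \<Rightarrow> f \<in> {2,3} | _ \<Rightarrow> True)"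

definition anh_wins where "anh_wins n ec w12 w13 w23 = wins n ec w12 w13 w23 True (initial n)"
definition bao_wins where "bao_wins n ec w12 w13 w23 = wins n ec w12 w13 w23 False (initial n)"
definition is_draw where
  "is_draw n ec w12 w13 w23 \<longleftrightarrow> \<not> anh_wins n ec w12 w13 w23 \<and> \<not> bao_wins n ec w12 w13 w23"

end

theory Submission
  imports Defs
begin

text \<open>Anh only ever moves the smallest disk. Bao may not move it back, and once the smallest disk
  is fixed a position admits at most one other legal move, so Bao's replies are forced and the
  game is a solitaire for Anh. Keeping all disks but the three smallest on peg 1, Anh can play
  seven-round cycles that restore the position and gain \<open>2 (2 w\<^sub>i\<^sub>j - w\<^sub>i\<^sub>k - w\<^sub>j\<^sub>k)\<close> for
  any chosen edge \<open>{i, j}\<close>; unless all weights agree one of these gains is positive, so after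
  enough cycles Anh leads by more than the fixed cost of then emptying peg 1 and building the final
  tower. With all weights equal to \<open>w\<close> the score difference alternates between \<open>0\<close> and \<open>w\<close>, so for
  \<open>w \<le> 0\<close> Anh never wins, while Bao never wins because Anh always has a move that does not end
  the game.\<close>

definition mk_state :: "pos \<Rightarrow> nat option \<Rightarrow> bool \<Rightarrow> bool \<Rightarrow> real \<Rightarrow> bool \<Rightarrow> gstate" where
  "mk_state p l b s d a = \<lparr>gpos = p, glast = l, gbig = b, gsmall = s, gdiff = d, ganh = a\<rparr>"

lemma mk_state_sel [simp]:
  "gpos (mk_state p l b s d a) = p" "glast (mk_state p l b s d a) = l"
  "gbig (mk_state p l b s d a) = b" "gsmall (mk_state p l b s d a) = s"
  "gdiff (mk_state p l b s d a) = d" "ganh (mk_state p l b s d a) = a"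
  by (simp_all add: mk_state_def)

lemma step_mk_state:
  "step n w12 w13 w23 (mk_state p l b s d a) e j =
     mk_state (p[e := j]) (Some e) (b \<or> e = n - 1) (s \<or> e = 0)
       (if a then d + weight w12 w13 w23 (p ! e) j else d - weight w12 w13 w23 (p ! e) j) (\<not> a)"
  by (simp add: step_def mk_state_def move_pos_def)

lemma weight_simps [simp]:
  "weight w12 w13 w23 1 2 = w12" "weight w12 w13 w23 2 1 = w12"
  "weight w12 w13 w23 1 3 = w13" "weight w12 w13 w23 3 1 = w13"
  "weight w12 w13 w23 2 3 = w23" "weight w12 w13 w23 3 2 = w23"
  "weight w12 w13 w23 (Suc 0) 2 = w12" "weight w12 w13 w23 2 (Suc 0) = w12"
  "weight w12 w13 w23 (Suc 0) 3 = w13" "weight w12 w13 w23 3 (Suc 0) = w13"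
  by (auto simp: weight_def doubleton_eq_iff)

lemma weight_const: "weight w w w = (\<lambda>_ _. w)"
  by (simp add: weight_def fun_eq_iff)

definition valid_pos :: "nat \<Rightarrow> pos \<Rightarrow> bool" where
  "valid_pos n p \<longleftrightarrow> length p = n \<and> (\<forall>e<n. peg (p ! e))"

definition other_peg :: "nat \<Rightarrow> nat \<Rightarrow> nat" where
  "other_peg a b = 6 - a - b"

lemma other_peg:
  "peg a \<Longrightarrow> peg b \<Longrightarrow> a \<noteq> b \<Longrightarrow> peg (other_peg a b) \<and> other_peg a b \<noteq> a \<and> other_peg a b \<noteq> b"
  by (auto simp: peg_def other_peg_def)

lemma legal_move_smallest: "legal_move n p 0 j \<longleftrightarrow> 0 < n \<and> peg j \<and> j \<noteq> p ! 0"
  unfolding legal_move_def by (metis gr0I le0)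

text \<open>Once the smallest disk has been fixed, the position admits at most one legal move: the
  smallest disk blocks one of the two other pegs, and between the tops of the remaining two
  pegs only the smaller one can move, and only in one direction.\<close>

lemma legal_move_unique_not_smallest:
  assumes "valid_pos n p" "legal_move n p d j" "legal_move n p d' j'" "d \<noteq> 0" "d' \<noteq> 0"
  shows "d = d' \<and> j = j'"
proof -
  have n: "0 < n" and dn: "d < n" "d' < n" using assms(2,3) by (auto simp: legal_move_def)
  have pg: "peg (p!0)" "peg (p!d)" "peg (p!d')" using assms(1) n dn by (auto simp: valid_pos_def)
  have L1: "\<forall>e<n. p ! e = p ! d \<longrightarrow> d \<le> e" "\<forall>e<n. p ! e = j \<longrightarrow> d < e" "peg j" "j \<noteq> p!d"
    using assms(2) by (simp_all add: legal_move_def)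
  have L2: "\<forall>e<n. p ! e = p ! d' \<longrightarrow> d' \<le> e" "\<forall>e<n. p ! e = j' \<longrightarrow> d' < e" "peg j'" "j' \<noteq> p!d'"
    using assms(3) by (simp_all add: legal_move_def)
  have blocked: "p!0 \<noteq> p!d" "p!0 \<noteq> j" "p!0 \<noteq> p!d'" "p!0 \<noteq> j'"
    using L1(1,2) L2(1,2) n assms(4,5) by force+
  show ?thesis
  proof (cases "p!d = p!d'")
    case True
    then have "d \<le> d'" "d' \<le> d" using L1(1) L2(1) dn by auto
    moreover have "j = j'" using blocked pg True L1(3,4) L2(3,4) unfolding peg_def by auto
    ultimately show ?thesis by simp
  next
    case False
    then have "p!d = j'" "p!d' = j" using blocked pg L1(3,4) L2(3,4) unfolding peg_def by auto
    then have "d' < d" "d < d'" using L1(2) L2(2) dn by auto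
    then show ?thesis by simp
  qed
qed

lemma tower_iff_all: "length p = n \<Longrightarrow> tower n p k \<longleftrightarrow> (\<forall>x\<in>set p. x = k)"
  by (auto simp: tower_def all_set_conv_all_nth)

lemma game_over_tower: "game_over n ec p b s \<Longrightarrow> \<exists>k. tower n p k"
  by (auto simp: game_over_def split: ending.splits)

lemma game_over_mono: "game_over n ec p b s \<Longrightarrow> (b \<longrightarrow> b') \<Longrightarrow> (s \<longrightarrow> s') \<Longrightarrow> game_over n ec p b' s'"
  by (auto simp: game_over_def split: ending.splits)

lemma not_ends_after_if_not_tower:
  "\<forall>k. \<not> tower n (move_pos (gpos s) d j) k \<Longrightarrow> \<not> ends_after n ec w12 w13 w23 s d j"
  by (auto simp: ends_after_def step_def dest!: game_over_tower)

context
  fixes n :: nat and ec :: ending and w12 w13 w23 :: real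
begin

abbreviation wins_anh :: "gstate \<Rightarrow> bool" where
  "wins_anh \<equiv> wins n ec w12 w13 w23 True"

abbreviation wt :: "nat \<Rightarrow> nat \<Rightarrow> real" where
  "wt \<equiv> weight w12 w13 w23"

lemma wins_anh_smallest_move:
  assumes "wins_anh (step n w12 w13 w23 s 0 j)" "ganh s" "glast s \<noteq> Some 0"
    "legal_move n (gpos s) 0 j" "\<forall>k. \<not> tower n (move_pos (gpos s) 0 j) k"
  shows "wins_anh s"
proof (rule wins.own_turn)
  show "allowed n ec w12 w13 w23 s 0 j" using assms(3-5) by (auto simp: allowed_def)
qed (use assms not_ends_after_if_not_tower in auto)

lemma wins_anh_final_smallest_move:
  assumes "ganh s" "glast s \<noteq> Some 0" "legal_move n (gpos s) 0 j"
    "ends_after n ec w12 w13 w23 s 0 j" "victor True (gdiff (step n w12 w13 w23 s 0 j))"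
  shows "wins_anh s"
proof (rule wins.own_turn)
  show "allowed n ec w12 w13 w23 s 0 j" using assms(2-4) by (auto simp: allowed_def)
qed (use assms in auto)

lemma wins_anh_forced_reply:
  assumes "\<not> ganh s" "glast s = Some 0" "valid_pos n (gpos s)" "legal_move n (gpos s) d j" "d \<noteq> 0"
    "\<forall>k. \<not> tower n (move_pos (gpos s) d j) k" "wins_anh (step n w12 w13 w23 s d j)"
  shows "wins_anh s"
proof (rule wins.opp_turn)
  show "\<exists>d j. allowed n ec w12 w13 w23 s d j" using assms by (auto simp: allowed_def)
  have "d' = d \<and> j' = j" if "allowed n ec w12 w13 w23 s d' j'" for d' j'
    using that legal_move_unique_not_smallest[OF assms(3,4)] assms(2,5) by (auto simp: allowed_def)
  then show "\<forall>d' j'. allowed n ec w12 w13 w23 s d' j' \<longrightarrow>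
      (ends_after n ec w12 w13 w23 s d' j' \<and> victor True (gdiff (step n w12 w13 w23 s d' j'))) \<or>
      (\<not> ends_after n ec w12 w13 w23 s d' j' \<and> wins_anh (step n w12 w13 w23 s d' j'))"
    using assms(6,7) not_ends_after_if_not_tower by blast
qed (use assms in simp)

lemma wins_anh_forced_big_move:
  assumes win: "wins_anh (mk_state (replicate m c @ b # rest) (Some m) big' sm (\<delta> - wt a b) True)"
    and big': "big' = (big \<or> m = n - 1)" and len: "length rest + Suc m = n" and m: "0 < m"
    and rest: "\<forall>x\<in>set rest. peg x"
    and pegs: "peg a" "peg b" "peg c" "a \<noteq> c" "b \<noteq> c" "a \<noteq> b"
  shows "wins_anh (mk_state (replicate m c @ a # rest) (Some 0) big sm \<delta> False)"
proof (rule wins_anh_forced_reply[where d = m and j = b])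
  let ?p = "replicate m c @ a # rest"
  show "valid_pos n (gpos (mk_state ?p (Some 0) big sm \<delta> False))"
    using len rest pegs by (auto simp: valid_pos_def nth_append nth_Cons' split: if_splits)
  show "legal_move n (gpos (mk_state ?p (Some 0) big sm \<delta> False)) m b"
    using len m pegs by (auto simp: legal_move_def nth_append nth_Cons' split: if_splits)
  have "?p[m := b] ! 0 \<noteq> ?p[m := b] ! m" "0 < n" "m < n" using len m pegs by (auto simp: nth_append)
  then show "\<forall>k. \<not> tower n (move_pos (gpos (mk_state ?p (Some 0) big sm \<delta> False)) m b) k"
    unfolding tower_def move_pos_def mk_state_sel by metis
  have "step n w12 w13 w23 (mk_state ?p (Some 0) big sm \<delta> False) m b
      = mk_state (replicate m c @ b # rest) (Some m) big' sm (\<delta> - wt a b) True"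
    using m big' by (simp add: step_mk_state list_update_append nth_append)
  then show "wins_anh (step n w12 w13 w23 (mk_state ?p (Some 0) big sm \<delta> False) m b)"
    using win by simp
qed (use m in simp_all)

text \<open>Net gain of Anh when the top \<open>m\<close> disks travel from \<open>a\<close> to \<open>b\<close> in the minimal way, Anh moving
  the smallest disk and Bao every other one: the top \<open>m - 1\<close> disks go to the third peg, Bao moves
  disk \<open>m - 1\<close>, and the top \<open>m - 1\<close> disks follow.\<close>

fun transfer_gain :: "(nat \<Rightarrow> nat \<Rightarrow> real) \<Rightarrow> nat \<Rightarrow> nat \<Rightarrow> nat \<Rightarrow> real" where
  "transfer_gain w 0 a b = 0"
| "transfer_gain w (Suc 0) a b = w a b"
| "transfer_gain w (Suc (Suc m)) a b =
     transfer_gain w (Suc m) a (other_peg a b) - w a b + transfer_gain w (Suc m) (other_peg a b) b"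

lemma transfer_gain_const: "transfer_gain (\<lambda>_ _. w) (Suc m) a b = w"
  by (induction m arbitrary: a b) simp_all

text \<open>The hypothesis on \<open>rest\<close> guarantees that no intermediate position is a tower.\<close>

lemma wins_anh_transfer:
  assumes "wins_anh (mk_state (replicate (Suc m) b @ rest) (Some 0) big True
      (\<delta> + transfer_gain wt (Suc m) a b) False)"
    and "length rest + Suc m = n" "\<forall>x\<in>set rest. peg x" "\<not> (\<forall>x\<in>set rest. x = b)"
    and "peg a" "peg b" "a \<noteq> b" "l \<noteq> Some 0"
  shows "wins_anh (mk_state (replicate (Suc m) a @ rest) l big sm \<delta> True)"
  using assms
proof (induction m arbitrary: a b rest l sm \<delta>)
  case 0
  have no_tower: "\<not> tower n (b # rest) k" for k
    using "0.prems"(2,4) tower_iff_all[of "b # rest" n k] by auto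
  have "rest \<noteq> []" using "0.prems"(4) by auto
  then have "0 \<noteq> n - 1" using "0.prems"(2) by auto
  then have "wins_anh (step n w12 w13 w23 (mk_state (a # rest) l big sm \<delta> True) 0 b)"
    using "0.prems"(1) by (simp add: step_mk_state)
  then have "wins_anh (mk_state (a # rest) l big sm \<delta> True)"
    by (rule wins_anh_smallest_move) (use "0.prems" no_tower in \<open>auto simp: legal_move_smallest move_pos_def\<close>)
  then show ?case by simp
next
  case (Suc m)
  define c where "c = other_peg a b"
  have c: "peg c" "c \<noteq> a" "c \<noteq> b" using other_peg[OF Suc.prems(5-7)] by (auto simp: c_def)
  have "rest \<noteq> []" using Suc.prems(4) by auto
  then have "Suc m \<noteq> n - 1" using Suc.prems(2) by auto
  moreover have "wins_anh (mk_state (replicate (Suc m) b @ b # rest) (Some 0) big True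
      (\<delta> + transfer_gain wt (Suc m) a c - wt a b + transfer_gain wt (Suc m) c b) False)"
    using Suc.prems(1) by (simp add: replicate_app_Cons_same c_def algebra_simps)
  ultimately have "wins_anh (mk_state (replicate (Suc m) c @ b # rest) (Some (Suc m))
      (big \<or> Suc m = n - 1) True (\<delta> + transfer_gain wt (Suc m) a c - wt a b) True)"
    using Suc.IH[where rest = "b # rest" and a = c and l = "Some (Suc m)" and sm = True]
      Suc.prems(2-4,6) c by simp
  then have "wins_anh (mk_state (replicate (Suc m) c @ a # rest) (Some 0) big True
      (\<delta> + transfer_gain wt (Suc m) a c) False)"
    by (rule wins_anh_forced_big_move) (use Suc.prems c in auto)
  then have "wins_anh (mk_state (replicate (Suc m) a @ a # rest) l big sm \<delta> True)"
    using Suc.IH[where rest = "a # rest" and b = c] Suc.prems(2,3,5-8) c by simp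
  then show ?case by (simp add: replicate_app_Cons_same)
qed

lemma wins_anh_transfer_final:
  assumes "game_over n ec (replicate n b) big True" "0 < \<delta> + transfer_gain wt (Suc m) a b"
    and "Suc m \<le> n" "peg a" "peg b" "a \<noteq> b" "l \<noteq> Some 0"
  shows "wins_anh (mk_state (replicate (Suc m) a @ replicate (n - Suc m) b) l big sm \<delta> True)"
  using assms
proof (induction m arbitrary: a b l big sm \<delta>)
  case 0
  have complete: "(a # replicate (n - 1) b)[0 := b] = replicate n b"
    using "0.prems"(3) by (cases n) auto
  show ?case
    by (rule wins_anh_final_smallest_move[where j = b])
      (use complete "0.prems" in \<open>auto simp: legal_move_smallest ends_after_def step_mk_state victor_def
        move_pos_def intro: game_over_mono\<close>)
next
  case (Suc m)
  define c where "c = other_peg a b"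
  have c: "peg c" "c \<noteq> a" "c \<noteq> b" using other_peg[OF Suc.prems(4-6)] by (auto simp: c_def)
  define r where "r = replicate (n - Suc (Suc m)) b"
  have "n - Suc m = Suc (n - Suc (Suc m))" using Suc.prems(3) by arith
  then have r: "b # r = replicate (n - Suc m) b" "length r + Suc (Suc m) = n"
    using Suc.prems(3) by (simp_all add: r_def)
  have "wins_anh (mk_state (replicate (Suc m) c @ replicate (n - Suc m) b) (Some (Suc m))
      (big \<or> Suc m = n - 1) True (\<delta> + transfer_gain wt (Suc m) a c - wt a b) True)"
    by (rule Suc.IH) (use Suc.prems c in \<open>auto simp: c_def algebra_simps intro: game_over_mono\<close>)
  then have "wins_anh (mk_state (replicate (Suc m) c @ a # r) (Some 0) big True
      (\<delta> + transfer_gain wt (Suc m) a c) False)"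
    unfolding r(1)[symmetric] by (rule wins_anh_forced_big_move) (use Suc.prems c r in \<open>auto simp: r_def\<close>)
  then have "wins_anh (mk_state (replicate (Suc m) a @ a # r) l big sm \<delta> True)"
    by (rule wins_anh_transfer) (use Suc.prems c r in \<open>auto simp: r_def\<close>)
  then show ?case by (simp add: replicate_app_Cons_same r_def)
qed

definition endgame_won :: "nat \<Rightarrow> nat \<Rightarrow> real \<Rightarrow> bool" where
  "endgame_won x y \<delta> \<longleftrightarrow> (\<forall>l big sm. l \<noteq> Some 0 \<longrightarrow> big \<longrightarrow>
     wins_anh (mk_state (replicate (n - 1) x @ [y]) l big sm \<delta> True))"

lemma endgame_won_tower:
  assumes "game_over n ec (replicate n y) True True" "0 < \<delta> + transfer_gain wt (n - 1) x y"
    and "2 \<le> n" "peg x" "peg y" "x \<noteq> y"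
  shows "endgame_won x y \<delta>"
  unfolding endgame_won_def
proof (intro allI impI)
  fix l big sm assume "l \<noteq> Some (0::nat)" big
  obtain m where m: "n - 1 = Suc m" using assms(3) by (cases "n - 1") auto
  then have "n - Suc m = 1" by arith
  then have "replicate (n - 1) x @ [y] = replicate (Suc m) x @ replicate (n - Suc m) y"
    using m by simp
  then show "wins_anh (mk_state (replicate (n - 1) x @ [y]) l big sm \<delta> True)"
    using wins_anh_transfer_final[of y big \<delta> m x l sm] assms m \<open>l \<noteq> Some 0\<close> \<open>big\<close> by simp
qed

text \<open>The largest disk returns to peg 1 via \<open>x\<close>, while the others travel \<open>x \<rightarrow> 1 \<rightarrow> y \<rightarrow> 1\<close>.\<close>

lemma endgame_won_start:
  assumes "game_over n ec (replicate n 1) True True"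
    and "0 < \<delta> + transfer_gain wt (n - 1) x 1 - wt y x + transfer_gain wt (n - 1) 1 y - wt x 1
      + transfer_gain wt (n - 1) y 1"
    and "2 \<le> n" "peg x" "peg y" "x \<noteq> y" "x \<noteq> 1" "y \<noteq> 1"
  shows "endgame_won x y \<delta>"
  unfolding endgame_won_def
proof (intro allI impI)
  fix l big sm assume l: "l \<noteq> Some (0::nat)" and big
  obtain m where m: "n - 1 = Suc m" using assms(3) by (cases "n - 1") auto
  then have n: "n = Suc (Suc m)" using assms(3) by arith
  have one: "peg 1" by (simp add: peg_def)
  let ?g = "transfer_gain wt (Suc m)"
  have "wins_anh (mk_state (replicate (Suc m) y @ [1]) (Some (Suc m)) True True
      (\<delta> + ?g x 1 - wt y x + ?g 1 y - wt x 1) True)"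
    using wins_anh_transfer_final[of 1 True "\<delta> + ?g x 1 - wt y x + ?g 1 y - wt x 1" m y]
      assms n one by (simp add: algebra_simps)
  then have "wins_anh (mk_state (replicate (Suc m) y @ [x]) (Some 0) True True
      (\<delta> + ?g x 1 - wt y x + ?g 1 y) False)"
    by (rule wins_anh_forced_big_move) (use assms n one in auto)
  then have "wins_anh (mk_state (replicate (Suc m) 1 @ [x]) (Some (Suc m)) True True
      (\<delta> + ?g x 1 - wt y x) True)"
    by (rule wins_anh_transfer) (use assms n one in auto)
  then have "wins_anh (mk_state (replicate (Suc m) 1 @ [y]) (Some 0) big True (\<delta> + ?g x 1) False)"
    by (rule wins_anh_forced_big_move) (use assms n one in auto)
  then have "wins_anh (mk_state (replicate (Suc m) x @ [y]) l big sm \<delta> True)"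
    by (rule wins_anh_transfer) (use assms n one l \<open>big\<close> in auto)
  then show "wins_anh (mk_state (replicate (n - 1) x @ [y]) l big sm \<delta> True)" using m by simp
qed

text \<open>Peg 1 is emptied from the top: the top \<open>j\<close> disks go from \<open>x\<close> onto disk \<open>j\<close> on \<open>y\<close>, after
  which Bao must move disk \<open>j + 1\<close> from peg 1 to \<open>x\<close>, and the roles of \<open>x\<close> and \<open>y\<close> swap.\<close>

fun clearing_gain :: "(nat \<Rightarrow> nat \<Rightarrow> real) \<Rightarrow> nat \<Rightarrow> nat \<Rightarrow> nat \<Rightarrow> nat \<Rightarrow> real" where
  "clearing_gain w 0 j x y = 0"
| "clearing_gain w (Suc k) j x y = transfer_gain w j x y - w 1 x + clearing_gain w k (Suc j) y x"

lemma clearing_gain_const: "0 < j \<Longrightarrow> clearing_gain (\<lambda>_ _. w) k j x y = 0"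
  by (induction k arbitrary: j x y) (auto simp: transfer_gain_const gr0_conv_Suc)

lemma wins_anh_clearing:
  assumes "endgame_won (if even k then x else y) (if even k then y else x) (\<delta> + clearing_gain wt k j x y)"
    and "0 < j" "j + k + 1 = n" "peg x" "peg y" "x \<noteq> y" "x \<noteq> 1" "y \<noteq> 1" "l \<noteq> Some 0"
    and "k = 0 \<longrightarrow> big"
  shows "wins_anh (mk_state (replicate j x @ y # replicate k 1) l big sm \<delta> True)"
  using assms
proof (induction k arbitrary: j x y l big sm \<delta>)
  case 0
  then show ?case by (auto simp: endgame_won_def)
next
  case (Suc k)
  obtain m where j: "j = Suc m" using Suc.prems(2) gr0_conv_Suc by auto
  have one: "peg 1" by (simp add: peg_def)
  have "wins_anh (mk_state (replicate (Suc j) y @ x # replicate k 1) (Some (Suc j))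
      (big \<or> Suc j = n - 1) True (\<delta> + transfer_gain wt j x y - wt 1 x) True)"
    by (rule Suc.IH) (use Suc.prems in \<open>auto simp: algebra_simps\<close>)
  then have "wins_anh (mk_state (replicate (Suc j) y @ 1 # replicate k 1) (Some 0) big True
      (\<delta> + transfer_gain wt j x y) False)"
    by (rule wins_anh_forced_big_move) (use Suc.prems one in \<open>auto simp: peg_def\<close>)
  then have "wins_anh (mk_state (replicate (Suc m) y @ y # replicate (Suc k) 1) (Some 0) big True
      (\<delta> + transfer_gain wt (Suc m) x y) False)"
    by (simp add: j replicate_app_Cons_same)
  then have "wins_anh (mk_state (replicate (Suc m) x @ y # replicate (Suc k) 1) l big sm \<delta> True)"
    by (rule wins_anh_transfer) (use Suc.prems one in \<open>auto simp: j\<close>)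
  then show ?case by (simp add: j)
qed

definition top3_pos :: "nat \<Rightarrow> nat \<Rightarrow> nat \<Rightarrow> pos" where
  "top3_pos a b c = [a, b, c] @ replicate (n - 3) 1"

lemma top3_pos_nth:
  "3 \<le> n \<Longrightarrow> e < n \<Longrightarrow>
    top3_pos a b c ! e = (if e = 0 then a else if e = 1 then b else if e = 2 then c else 1)"
  by (auto simp: top3_pos_def nth_append nth_Cons' numeral_3_eq_3)

lemma top3_pos_simps [simp]:
  "top3_pos a b c ! 0 = a" "top3_pos a b c ! Suc 0 = b" "top3_pos a b c ! 2 = c"
  "(top3_pos a b c)[0 := x] = top3_pos x b c" "(top3_pos a b c)[Suc 0 := x] = top3_pos a x c"
  "(top3_pos a b c)[2 := x] = top3_pos a b x"
  by (simp_all add: top3_pos_def numeral_2_eq_2)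

lemma length_top3_pos: "3 \<le> n \<Longrightarrow> length (top3_pos a b c) = n"
  by (simp add: top3_pos_def)

lemma top3_pos_tower: "3 \<le> n \<Longrightarrow> tower n (top3_pos a b c) k \<Longrightarrow> a = k \<and> b = k \<and> c = k"
  by (simp add: tower_iff_all length_top3_pos) (simp add: top3_pos_def)

lemma top3_pos_valid: "3 \<le> n \<Longrightarrow> peg a \<Longrightarrow> peg b \<Longrightarrow> peg c \<Longrightarrow> valid_pos n (top3_pos a b c)"
  unfolding valid_pos_def by (auto simp: length_top3_pos top3_pos_nth peg_def)

lemma legal_move_top3_second:
  assumes "3 \<le> n" "peg j" "j \<noteq> b" "a \<noteq> b" "a \<noteq> j"
  shows "legal_move n (top3_pos a b c) 1 j"
  unfolding legal_move_def
proof (intro conjI allI impI)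
  fix e assume "e < n" "top3_pos a b c ! e = top3_pos a b c ! 1"
  then show "1 \<le> e" using assms top3_pos_nth[of e a b c] by (cases "e = 0") auto
next
  fix e assume "e < n" "top3_pos a b c ! e = j"
  then show "1 < e" using assms top3_pos_nth[of e a b c] by (cases "e = 0"; cases "e = 1") auto
qed (use assms in auto)

lemma legal_move_top3_third:
  assumes "3 \<le> n" "peg j" "j \<noteq> c" "a \<noteq> c" "a \<noteq> j"
  shows "legal_move n (top3_pos a a c) 2 j"
  unfolding legal_move_def
proof (intro conjI allI impI)
  fix e assume "e < n" "top3_pos a a c ! e = top3_pos a a c ! 2"
  then show "2 \<le> e" using assms top3_pos_nth[of e a a c] by (cases "e = 0"; cases "e = 1") auto
next
  fix e assume "e < n" "top3_pos a a c ! e = j"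
  then show "2 < e" using assms top3_pos_nth[of e a a c] by (cases "e = 0"; cases "e = 1"; cases "e = 2") auto
qed (use assms in auto)

text \<open>For \<open>n = 3\<close> disk 2 is the largest one, which has been moved once it has left peg 1.\<close>

definition wins_top3 :: "nat \<times> nat \<times> nat \<Rightarrow> real \<Rightarrow> bool" where
  "wins_top3 t \<delta> \<longleftrightarrow> (case t of (a, b, c) \<Rightarrow>
     \<forall>l big sm. l \<noteq> Some 0 \<longrightarrow> (n = 3 \<and> c \<noteq> 1 \<longrightarrow> big) \<longrightarrow>
       wins_anh (mk_state (top3_pos a b c) l big sm \<delta> True))"

text \<open>A round of the opening: Anh moves the smallest disk from \<open>a\<close> to \<open>j\<close>; Bao must then move
  disk 1 if it is free and disk 2 otherwise, in either case to the peg left free by the other two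
  top disks.\<close>

fun round_next :: "nat \<times> nat \<times> nat \<Rightarrow> nat \<Rightarrow> nat \<times> nat \<times> nat" where
  "round_next (a, b, c) j = (if b \<noteq> j then (j, other_peg j b, c) else (j, b, other_peg j c))"

fun round_gain :: "(nat \<Rightarrow> nat \<Rightarrow> real) \<Rightarrow> nat \<times> nat \<times> nat \<Rightarrow> nat \<Rightarrow> real" where
  "round_gain w (a, b, c) j = w a j - (if b \<noteq> j then w b (other_peg j b) else w c (other_peg j c))"

fun rounds_gain :: "(nat \<Rightarrow> nat \<Rightarrow> real) \<Rightarrow> nat \<times> nat \<times> nat \<Rightarrow> nat list \<Rightarrow> real" where
  "rounds_gain w t [] = 0"
| "rounds_gain w t (j # js) = round_gain w t j + rounds_gain w (round_next t j) js"

fun rounds_ok :: "nat \<times> nat \<times> nat \<Rightarrow> nat list \<Rightarrow> bool" where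
  "rounds_ok t [] = True"
| "rounds_ok (a, b, c) (j # js) \<longleftrightarrow> peg a \<and> peg b \<and> peg c \<and> peg j \<and> j \<noteq> a \<and> \<not> (b = j \<and> c = j) \<and>
     rounds_ok (round_next (a, b, c) j) js"

lemma wins_anh_top3_reply_second:
  assumes "wins_anh (mk_state (top3_pos j (other_peg j b) c) (Some 1) big True
      (\<delta> - wt b (other_peg j b)) True)"
    and n: "3 \<le> n" and pegs: "peg j" "peg b" "peg c" "b \<noteq> j"
  shows "wins_anh (mk_state (top3_pos j b c) (Some 0) big True \<delta> False)"
proof (rule wins_anh_forced_reply[where d = 1 and j = "other_peg j b"])
  let ?s = "mk_state (top3_pos j b c) (Some 0) big True \<delta> False"
  show "\<forall>k. \<not> tower n (move_pos (gpos ?s) 1 (other_peg j b)) k"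
    using top3_pos_tower[OF n, of j "other_peg j b" c] other_peg[of j b] pegs
    by (auto simp: move_pos_def)
  have "Suc 0 \<noteq> n - 1" using n by arith
  then show "wins_anh (step n w12 w13 w23 ?s 1 (other_peg j b))"
    using assms(1) by (simp add: step_mk_state)
qed (use n pegs other_peg[of j b] legal_move_top3_second[OF n, of "other_peg j b" b j c] in
  \<open>simp_all add: top3_pos_valid\<close>)

lemma wins_anh_top3_reply_third:
  assumes "wins_anh (mk_state (top3_pos j j (other_peg j c)) (Some 2) (big \<or> 2 = n - 1) True
      (\<delta> - wt c (other_peg j c)) True)"
    and n: "3 \<le> n" and pegs: "peg j" "peg c" "c \<noteq> j"
  shows "wins_anh (mk_state (top3_pos j j c) (Some 0) big True \<delta> False)"
proof (rule wins_anh_forced_reply[where d = 2 and j = "other_peg j c"])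
  let ?s = "mk_state (top3_pos j j c) (Some 0) big True \<delta> False"
  show "\<forall>k. \<not> tower n (move_pos (gpos ?s) 2 (other_peg j c)) k"
    using top3_pos_tower[OF n, of j j "other_peg j c"] other_peg[of j c] pegs
    by (auto simp: move_pos_def)
  show "wins_anh (step n w12 w13 w23 ?s 2 (other_peg j c))"
    using assms(1) by (simp add: step_mk_state)
qed (use n pegs other_peg[of j c] in \<open>simp_all add: top3_pos_valid legal_move_top3_third\<close>)

lemma wins_top3_round:
  assumes win: "wins_top3 (round_next (a, b, c) j) (\<delta> + round_gain wt (a, b, c) j)"
    and n: "3 \<le> n" and pegs: "peg a" "peg b" "peg c" "peg j" "j \<noteq> a" "\<not> (b = j \<and> c = j)"
  shows "wins_top3 (a, b, c) \<delta>"
  unfolding wins_top3_def prod.case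
proof (intro allI impI)
  fix l big sm assume l: "l \<noteq> Some (0::nat)" and big: "n = 3 \<and> c \<noteq> 1 \<longrightarrow> big"
  let ?s = "mk_state (top3_pos a b c) l big sm \<delta> True"
  have "wins_anh (mk_state (top3_pos j b c) (Some 0) big True (\<delta> + wt a j) False)"
  proof (cases "b = j")
    case False
    show ?thesis
      by (rule wins_anh_top3_reply_second) (use False win big n pegs in \<open>auto simp: wins_top3_def algebra_simps\<close>)
  next
    case True
    show ?thesis unfolding True
      by (rule wins_anh_top3_reply_third) (use True win n pegs in \<open>auto simp: wins_top3_def algebra_simps\<close>)
  qed
  then have "wins_anh (step n w12 w13 w23 ?s 0 j)"
    using n by (simp add: step_mk_state)
  then show "wins_anh ?s"
    by (rule wins_anh_smallest_move)
      (use n pegs l top3_pos_tower[OF n, of j b c] in \<open>auto simp: legal_move_smallest move_pos_def\<close>)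
qed

lemma wins_top3_rounds:
  assumes "wins_top3 (foldl round_next t js) (\<delta> + rounds_gain wt t js)" "rounds_ok t js" "3 \<le> n"
  shows "wins_top3 t \<delta>"
  using assms(1,2)
proof (induction t js arbitrary: \<delta> rule: rounds_ok.induct)
  case (1 t)
  then show ?case by simp
next
  case (2 a b c j js)
  have "wins_top3 (round_next (a, b, c) j) (\<delta> + round_gain wt (a, b, c) j)"
    by (rule "2.IH") (use "2.prems" in \<open>auto simp: algebra_simps\<close>)
  then show ?case by (rule wins_top3_round) (use 2 assms(3) in auto)
qed

lemma wins_top3_cycle:
  assumes "wins_top3 t (\<delta> + real k * rounds_gain wt t cyc)"
    and "foldl round_next t cyc = t" "rounds_ok t cyc" "3 \<le> n"
  shows "wins_top3 t \<delta>"
  using assms(1)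
proof (induction k arbitrary: \<delta>)
  case 0
  then show ?case by simp
next
  case (Suc k)
  have "wins_top3 t (\<delta> + rounds_gain wt t cyc)"
    by (rule Suc.IH) (use Suc.prems in \<open>simp add: algebra_simps\<close>)
  then show ?case using wins_top3_rounds[of t cyc] assms(2-4) by simp
qed

lemma wins_top3_clearing:
  assumes "endgame_won (if even (n - 3) then x else y) (if even (n - 3) then y else x)
      (\<delta> + clearing_gain wt (n - 3) 2 x y)"
    and "3 \<le> n" "peg x" "peg y" "x \<noteq> y" "x \<noteq> 1" "y \<noteq> 1"
  shows "wins_top3 (x, x, y) \<delta>"
proof -
  have "top3_pos x x y = replicate 2 x @ y # replicate (n - 3) 1"
    by (simp add: top3_pos_def numeral_2_eq_2)
  then show ?thesis
    using wins_anh_clearing[of "n - 3" x y \<delta> 2] assms by (auto simp: wins_top3_def)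
qed

lemma anh_wins_if_wins_top3_initial:
  assumes "wins_top3 (1, 1, 1) 0" "3 \<le> n"
  shows "anh_wins n ec w12 w13 w23"
proof -
  have "initial n = mk_state (top3_pos 1 1 1) None False False 0 True"
    using assms(2) by (simp add: initial_def mk_state_def top3_pos_def replicate_add[symmetric]
      numeral_3_eq_3 flip: replicate_Suc)
  then show ?thesis using assms by (simp add: anh_wins_def wins_top3_def)
qed

text \<open>Each listed cycle of seven rounds gains \<open>2 (2 w\<^sub>i\<^sub>j - w\<^sub>i\<^sub>k - w\<^sub>j\<^sub>k)\<close> for one edge \<open>{i, j}\<close>;
  these three quantities sum to zero, so one of them is positive unless all weights agree.\<close>

lemma profitable_cycle:
  assumes "x \<in> {2, 3}" "y = 5 - x" "\<not> (w12 = w13 \<and> w13 = w23)"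
  obtains cyc where "foldl round_next (x, x, y) cyc = (x, x, y)" "rounds_ok (x, x, y) cyc"
    "0 < rounds_gain wt (x, x, y) cyc"
proof -
  consider "0 < 2 * w12 - w13 - w23" | "0 < 2 * w13 - w12 - w23" | "0 < 2 * w23 - w12 - w13"
    using assms(3) by linarith
  then show thesis
  proof cases
    case 1
    show thesis
    proof (cases "x = 2")
      case True
      then show thesis using 1 assms(2)
        by (intro that[of "[1, 2, 1, 2, 3, 1, 2]"]) (simp_all add: peg_def other_peg_def)
    next
      case False
      then show thesis using 1 assms(1,2)
        by (intro that[of "[2, 1, 2, 1, 2, 1, 3]"]) (auto simp: peg_def other_peg_def)
    qed
  next
    case 2
    show thesis
    proof (cases "x = 2")
      case True
      then show thesis using 2 assms(2)
        by (intro that[of "[3, 1, 3, 1, 3, 1, 2]"]) (simp_all add: peg_def other_peg_def)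
    next
      case False
      then show thesis using 2 assms(1,2)
        by (intro that[of "[1, 3, 1, 3, 2, 1, 3]"]) (auto simp: peg_def other_peg_def)
    qed
  next
    case 3
    show thesis
    proof (cases "x = 2")
      case True
      then show thesis using 3 assms(2)
        by (intro that[of "[3, 1, 2, 3, 2, 3, 2]"]) (simp_all add: peg_def other_peg_def)
    next
      case False
      then show thesis using 3 assms(1,2)
        by (intro that[of "[2, 1, 3, 2, 3, 2, 3]"]) (auto simp: peg_def other_peg_def)
    qed
  qed
qed

text \<open>\<open>L\<close> is Anh's net gain in the endgame. The opening to \<open>(x, x, y)\<close> and the clearing of peg 1
  have a fixed cost, which enough repetitions of a profitable cycle outweigh; with constant
  positive weights no cycle is needed.\<close>

lemma anh_wins_via_endgame:
  assumes endgame: "\<And>\<delta>. 0 < \<delta> + L \<Longrightarrow>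
      endgame_won (if even (n - 3) then x else y) (if even (n - 3) then y else x) \<delta>"
    and L: "w12 = w13 \<and> w13 = w23 \<Longrightarrow> L = w12"
    and nondeg: "\<not> (w12 = w13 \<and> w13 = w23 \<and> w12 \<le> 0)"
    and n: "3 \<le> n" and xy: "x \<in> {2, 3}" "y = 5 - x"
  shows "anh_wins n ec w12 w13 w23"
proof -
  let ?opening = "rounds_gain wt (1, 1, 1) [y, x]"
  let ?clearing = "clearing_gain wt (n - 3) 2 x y"
  obtain cyc k where cyc: "foldl round_next (x, x, y) cyc = (x, x, y)" "rounds_ok (x, x, y) cyc"
    and pos: "0 < ?opening + real k * rounds_gain wt (x, x, y) cyc + ?clearing + L"
  proof (cases "w12 = w13 \<and> w13 = w23")
    case True
    then have "?opening = 0" "?clearing = 0" "0 < L"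
      using nondeg L clearing_gain_const[of 2 w12] by (auto simp: weight_const)
    then show thesis by (intro that[of "[]" 0]) simp_all
  next
    case False
    then obtain cyc where cyc: "foldl round_next (x, x, y) cyc = (x, x, y)" "rounds_ok (x, x, y) cyc"
      and gain: "0 < rounds_gain wt (x, x, y) cyc"
      using profitable_cycle xy by blast
    obtain k where "- (?opening + ?clearing + L) < real k * rounds_gain wt (x, x, y) cyc"
      using reals_Archimedean3[OF gain] by blast
    then show thesis using cyc by (intro that[of cyc k]) simp_all
  qed
  have pegs: "peg x" "peg y" "x \<noteq> y" "x \<noteq> 1" "y \<noteq> 1" using xy by (auto simp: peg_def)
  have "wins_top3 (x, x, y) (?opening + real k * rounds_gain wt (x, x, y) cyc)"
    by (rule wins_top3_clearing) (use endgame pos n pegs in \<open>simp_all add: algebra_simps\<close>)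
  then have "wins_top3 (x, x, y) ?opening"
    by (rule wins_top3_cycle) (use cyc n in simp_all)
  moreover have opening_rounds: "foldl round_next (1, 1, 1) [y, x] = (x, x, y)" "rounds_ok (1, 1, 1) [y, x]"
    using xy by (auto simp: peg_def other_peg_def)
  ultimately have "wins_top3 (foldl round_next (1, 1, 1) [y, x]) (0 + ?opening)"
    by simp
  then have "wins_top3 (1, 1, 1) 0"
    by (rule wins_top3_rounds[OF _ opening_rounds(2) n])
  then show ?thesis using n by (rule anh_wins_if_wins_top3_initial)
qed

lemma anh_wins_tower_2_3:
  assumes "game_over n ec (replicate n f) True True" "f \<in> {2, 3}"
    and nondeg: "\<not> (w12 = w13 \<and> w13 = w23 \<and> w12 \<le> 0)" and n: "3 \<le> n"
  shows "anh_wins n ec w12 w13 w23"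
proof -
  define x where "x = (if even (n - 3) then 5 - f else f)"
  have x: "x \<in> {2, 3}" using assms(2) by (auto simp: x_def)
  have pair: "(if even (n - 3) then x else 5 - x) = 5 - f" "(if even (n - 3) then 5 - x else x) = f"
    using assms(2) by (auto simp: x_def)
  obtain m where m: "n - 1 = Suc m" using n by (cases "n - 1") auto
  show ?thesis
  proof (rule anh_wins_via_endgame[OF _ _ nondeg n x refl])
    show "endgame_won (if even (n - 3) then x else 5 - x) (if even (n - 3) then 5 - x else x) \<delta>"
      if "0 < \<delta> + transfer_gain wt (n - 1) (5 - f) f" for \<delta>
      unfolding pair using that assms(1,2) n by (intro endgame_won_tower) (auto simp: peg_def)
    show "transfer_gain wt (n - 1) (5 - f) f = w12" if "w12 = w13 \<and> w13 = w23"
      using that m by (simp add: weight_const transfer_gain_const)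
  qed
qed

lemma anh_wins_tower_1:
  assumes "game_over n ec (replicate n 1) True True"
    and nondeg: "\<not> (w12 = w13 \<and> w13 = w23 \<and> w12 \<le> 0)" and n: "3 \<le> n"
  shows "anh_wins n ec w12 w13 w23"
proof -
  let ?x = "if even (n - 3) then 2 else 3 :: nat" and ?y = "if even (n - 3) then 3 else 2 :: nat"
  let ?g = "transfer_gain wt (n - 1)"
  let ?L = "?g ?x 1 - wt ?y ?x + ?g 1 ?y - wt ?x 1 + ?g ?y 1"
  obtain m where m: "n - 1 = Suc m" using n by (cases "n - 1") auto
  show ?thesis
  proof (rule anh_wins_via_endgame[OF _ _ nondeg n, where x = 2 and y = 3 and L = ?L])
    fix \<delta> :: real assume "0 < \<delta> + ?L"
    then show "endgame_won ?x ?y \<delta>"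
      by (intro endgame_won_start) (use assms(1) n in \<open>auto simp: peg_def algebra_simps\<close>)
  next
    assume "w12 = w13 \<and> w13 = w23"
    then show "?L = w12" using m by (simp add: weight_const transfer_gain_const)
  qed simp_all
qed

end

lemma valid_ending_final_tower:
  "valid_ending ec \<Longrightarrow>
    game_over n ec (replicate n 1) True True \<or> (\<exists>f\<in>{2, 3}. game_over n ec (replicate n f) True True)"
  by (cases ec) (auto simp: valid_ending_def game_over_def tower_def peg_def)

text \<open>With constant weights \<open>w\<close> the score difference is \<open>0\<close> before each move of Anh and \<open>w\<close> before
  each move of Bao.\<close>

lemma not_wins_anh_const:
  assumes "wins n ec w w w True s" "gdiff s = (if ganh s then 0 else w)" "w \<le> 0"
  shows False
  using assms(1,2)
proof (induction rule: wins.induct)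
  case (own_turn s d j)
  then show ?case using assms(3) by (auto simp: step_def weight_const victor_def)
next
  case (opp_turn s)
  then obtain d j where "allowed n ec w w w s d j" by blast
  then have "(ends_after n ec w w w s d j \<and> victor True (gdiff (step n w w w s d j))) \<or>
      (\<not> ends_after n ec w w w s d j \<and>
       (gdiff (step n w w w s d j) = (if ganh (step n w w w s d j) then 0 else w) \<longrightarrow> False))"
    using opp_turn.IH by blast
  then show ?case using opp_turn.hyps(1) opp_turn.prems by (auto simp: step_def weight_const victor_def)
qed

lemma valid_pos_step:
  "valid_pos n (gpos s) \<Longrightarrow> legal_move n (gpos s) d j \<Longrightarrow> valid_pos n (gpos (step n w12 w13 w23 s d j))"
  by (auto simp: valid_pos_def step_def move_pos_def legal_move_def nth_list_update)

text \<open>A move completing a tower must move the smallest disk onto disk 1; sending the smallest disk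
  to the third peg instead completes no tower.\<close>

lemma exists_nonending_move:
  assumes "2 \<le> n" "valid_pos n (gpos s)" "allowed n ec w12 w13 w23 s d j"
  shows "\<exists>d' j'. allowed n ec w12 w13 w23 s d' j' \<and> \<not> ends_after n ec w12 w13 w23 s d' j'"
proof (cases "ends_after n ec w12 w13 w23 s d j")
  case False
  then show ?thesis using assms(3) by blast
next
  case True
  let ?p = "gpos s"
  obtain k where t: "tower n (?p[d := j]) k"
    using True by (auto simp: ends_after_def step_def move_pos_def dest!: game_over_tower)
  have legal: "legal_move n ?p d j" and last: "glast s \<noteq> Some d" using assms(3) by (auto simp: allowed_def)
  have len: "length ?p = n" using assms(2) by (simp add: valid_pos_def)
  have "d < n" using legal by (simp add: legal_move_def)
  then have jk: "j = k" using t len unfolding tower_def by (metis nth_list_update_eq)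
  have d0: "d = 0"
  proof (rule ccontr)
    assume "d \<noteq> 0"
    then have "?p ! 0 = k" using t assms(1) unfolding tower_def by (metis nth_list_update_neq not_numeral_le_zero gr0I)
    then show False using legal jk assms(1) unfolding legal_move_def by (metis gr0I not_less_zero)
  qed
  have p1: "?p ! 1 = j" using t assms(1) d0 jk unfolding tower_def
    by (metis One_nat_def nth_list_update_neq Suc_le_lessD numeral_2_eq_2 zero_neq_one)
  have pegs: "peg (?p ! 0)" "peg j" "?p ! 0 \<noteq> j" using assms(1,2) legal d0 by (auto simp: valid_pos_def legal_move_def)
  define j' where "j' = other_peg (?p ! 0) j"
  have j': "peg j'" "j' \<noteq> ?p ! 0" "j' \<noteq> j" using other_peg[OF pegs] by (auto simp: j'_def)
  have no_tower: "\<not> tower n (?p[0 := j']) k'" for k'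
  proof
    assume "tower n (?p[0 := j']) k'"
    then have all: "\<forall>e<n. ?p[0 := j'] ! e = k'" by (simp add: tower_def)
    show False using spec[OF all, of 0] spec[OF all, of 1] j' p1 len assms(1) by auto
  qed
  have "allowed n ec w12 w13 w23 s 0 j'"
    unfolding allowed_def using legal last d0 j' no_tower assms(1) by (auto simp: legal_move_smallest move_pos_def)
  moreover have "\<not> ends_after n ec w12 w13 w23 s 0 j'"
    using no_tower by (intro not_ends_after_if_not_tower) (simp add: move_pos_def)
  ultimately show ?thesis by blast
qed

lemma not_wins_bao_const:
  assumes "wins n ec w w w False s" "valid_pos n (gpos s)" "gdiff s = (if ganh s then 0 else w)" "2 \<le> n"
  shows False
  using assms(1-3)
proof (induction rule: wins.induct)
  case (own_turn s d j)
  then have "valid_pos n (gpos (step n w w w s d j))" by (simp add: valid_pos_step allowed_def)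
  then show ?case using own_turn by (auto simp: step_def weight_const victor_def)
next
  case (opp_turn s)
  then obtain d j where "allowed n ec w w w s d j" by blast
  then obtain d' j' where move: "allowed n ec w w w s d' j'" "\<not> ends_after n ec w w w s d' j'"
    using exists_nonending_move[OF assms(4) opp_turn.prems(1)] by blast
  then have "valid_pos n (gpos (step n w w w s d' j'))"
    using opp_turn.prems(1) by (simp add: valid_pos_step allowed_def)
  then show ?case using opp_turn move by (fastforce simp: step_def weight_const victor_def)
qed

theorem theorem4:
  fixes n :: nat and ec :: ending and w12 w13 w23 :: real
  assumes "n \<ge> 3" and "valid_ending ec"
  shows "(\<not> (w12 = w13 \<and> w13 = w23 \<and> w12 \<le> 0) \<longrightarrow> anh_wins n ec w12 w13 w23) \<and>
         ((w12 = w13 \<and> w13 = w23 \<and> w12 \<le> 0) \<longrightarrow> is_draw n ec w12 w13 w23)"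
proof (intro conjI impI)
  assume "\<not> (w12 = w13 \<and> w13 = w23 \<and> w12 \<le> 0)"
  then show "anh_wins n ec w12 w13 w23"
    using valid_ending_final_tower[OF assms(2)] anh_wins_tower_1 anh_wins_tower_2_3 assms(1) by blast
next
  assume const: "w12 = w13 \<and> w13 = w23 \<and> w12 \<le> 0"
  have start: "valid_pos n (gpos (initial n))" "gdiff (initial n) = (if ganh (initial n) then 0 else w12)"
    by (auto simp: initial_def valid_pos_def peg_def)
  have "\<not> anh_wins n ec w12 w12 w12" "\<not> bao_wins n ec w12 w12 w12"
    using not_wins_anh_const[OF _ start(2)] not_wins_bao_const[OF _ start] const assms(1)
    by (auto simp: anh_wins_def bao_wins_def)
  then show "is_draw n ec w12 w13 w23" using const by (simp add: is_draw_def)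
qed

end
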